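(* If $\mu>-\frac{3}{2}$ and $|\mu|>|\nu|$, then $x\mapsto \mathbf{L}_\mu(x)/\tilde{t}_{\mu,\nu}(x)$ is strictly increasing on $(0,\infty)$. If $\mu>-\frac{3}{2}$ and $|\mu|<|\nu|<\mu+3$, then $x\mapsto \mathbf{L}_\mu(x)/\tilde{t}_{\mu,\nu}(x)$ is strictly decreasing on $(0,\infty)$.
   Context: For real $\mu,\nu$ the (normalized) modified Lommel function of the first kind is $$\tilde{t}_{\mu,\nu}(x)=\sum_{k=0}^\infty\frac{(\frac{1}{2}x)^{\mu+2k+1}}{\Gamma\big(k+\frac{\mu-\nu+3}{2}\big)\Gamma\big(k+\frac{\mu+\nu+3}{2}\big)},\quad x>0,$$ and the modified Struve function of the first kind is $$\mathbf{L}_\mu(x)=\sum_{k=0}^\infty\frac{(\frac{1}{2}x)^{2k+\mu+1}}{\Gamma(k+\frac{3}{2})\Gamma(k+\mu+\frac{3}{2})}.$$ *)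

theory Defs
  imports "HOL-Analysis.Analysis"
begin

text \<open>Normalized modified Lommel function of the first kind. Reciprocal Gamma is
  written with rGamma (= 1/Gamma, taking value 0 at the poles).\<close>
definition lommel_t :: "real \<Rightarrow> real \<Rightarrow> real \<Rightarrow> real" where
  "lommel_t \<mu> \<nu> x = (\<Sum>k. (x / 2) powr (\<mu> + 2 * real k + 1)
      * rGamma (real k + (\<mu> - \<nu> + 3) / 2) * rGamma (real k + (\<mu> + \<nu> + 3) / 2))"

definition struve_L :: "real \<Rightarrow> real \<Rightarrow> real" where
  "struve_L \<mu> x = (\<Sum>k. (x / 2) powr (2 * real k + \<mu> + 1)
      * rGamma (real k + 3 / 2) * rGamma (real k + \<mu> + 3 / 2))"

end

theory Submission
  imports Defs
begin

(* Since struve_L mu = lommel_t mu mu, it suffices to compare lommel_t mu nu1 with lommel_t mu nu2.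
   For x > 0, lommel_t mu nu x = (x/2) powr (mu+1) * sum_k c_k y^k with y = (x/2)^2 and
   c_k = rGamma (k+p) * rGamma (k+q), where p, q = (mu -+ nu + 3)/2. The sum p + q = mu + 3 does not
   depend on nu, while p q = ((mu+3)^2 - nu^2)/4 decreases in |nu|. As c_(k+1) = c_k / ((k+p)(k+q)),
   the ratio of the coefficient sequences for nu1 and nu2 is strictly monotone in k, in the direction
   given by comparing |nu1| and |nu2|. A quotient A/B of power series with positive coefficients
   and strictly increasing coefficient ratio is strictly increasing on (0, inf): symmetrising,
   2 (A(z) B(y) - A(y) B(z)) is a double sum of the nonnegative terms
   (a_i b_j - a_j b_i)(z^i y^j - y^i z^j). *)

lemma power_series_cross_term_nonneg:
  fixes a b :: "nat \<Rightarrow> real"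
  assumes b_pos: "\<And>k. b k > 0" and ratio_mono: "strict_mono (\<lambda>k. a k / b k)"
    and y: "0 < y" and yz: "y < z"
  shows "0 \<le> (a i * b j - a j * b i) * (z ^ i * y ^ j - y ^ i * z ^ j)"
proof -
  have ordered: "a j * b i \<le> a i * b j \<and> y ^ i * z ^ j \<le> z ^ i * y ^ j" if "j \<le> i" for i j
  proof
    have "a j / b j \<le> a i / b i" using strict_mono_less_eq[OF ratio_mono] that by blast
    then show "a j * b i \<le> a i * b j" using b_pos[of i] b_pos[of j] by (simp add: field_simps)
    have "y ^ (i - j) * (y ^ j * z ^ j) \<le> z ^ (i - j) * (y ^ j * z ^ j)"
      using y yz by (intro mult_right_mono power_mono) auto
    moreover have "y ^ i = y ^ (i - j) * y ^ j" "z ^ i = z ^ (i - j) * z ^ j"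
      using that by (simp_all flip: power_add)
    ultimately show "y ^ i * z ^ j \<le> z ^ i * y ^ j"
      by (simp add: mult_ac)
  qed
  show ?thesis
  proof (cases "j \<le> i")
    case True
    then show ?thesis using ordered[of j i] by simp
  next
    case False
    then show ?thesis using ordered[of i j] by (intro mult_nonpos_nonpos) (simp_all add: mult_ac)
  qed
qed

lemma power_series_cross_difference_lower_bound:
  fixes a b :: "nat \<Rightarrow> real"
  assumes b_pos: "\<And>k. b k > 0" and ratio_mono: "strict_mono (\<lambda>k. a k / b k)"
    and y: "0 < y" and yz: "y < z" and n: "2 \<le> n"
  shows "(a 1 * b 0 - a 0 * b 1) * (z - y)
    \<le> (\<Sum>k<n. a k * z ^ k) * (\<Sum>k<n. b k * y ^ k) - (\<Sum>k<n. a k * y ^ k) * (\<Sum>k<n. b k * z ^ k)"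
proof -
  define t where "t i j = (a i * b j - a j * b i) * (z ^ i * y ^ j - y ^ i * z ^ j)" for i j
  define h where "h i j = a i * b j * (z ^ i * y ^ j - y ^ i * z ^ j)" for i j
  have t_nonneg: "0 \<le> t i j" for i j
    unfolding t_def by (rule power_series_cross_term_nonneg[OF b_pos ratio_mono y yz])
  have t_split: "t i j = h i j + h j i" for i j
    unfolding t_def h_def by algebra
  have "(\<Sum>i<n. \<Sum>j<n. t i j) = (\<Sum>i<n. \<Sum>j<n. h i j) + (\<Sum>i<n. \<Sum>j<n. h j i)"
    by (simp add: t_split sum.distrib)
  also have "\<dots> = 2 * (\<Sum>i<n. \<Sum>j<n. h i j)"
    by (subst sum.swap) simp
  also have "(\<Sum>i<n. \<Sum>j<n. h i j)
      = (\<Sum>k<n. a k * z ^ k) * (\<Sum>k<n. b k * y ^ k) - (\<Sum>k<n. a k * y ^ k) * (\<Sum>k<n. b k * z ^ k)"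
    unfolding h_def sum_product by (simp add: sum_subtractf [symmetric] algebra_simps)
  finally have double_sum: "(\<Sum>i<n. \<Sum>j<n. t i j) = 2 * \<dots>" .
  have "2 * ((a 1 * b 0 - a 0 * b 1) * (z - y)) = t 0 1 + t 1 0"
    by (simp add: t_def algebra_simps)
  also have "\<dots> = (\<Sum>(i, j)\<in>{(0, 1), (1, 0)}. t i j)"
    by simp
  also have "\<dots> \<le> (\<Sum>(i, j)\<in>{..<n} \<times> {..<n}. t i j)"
    using n t_nonneg by (intro sum_mono2) auto
  also have "\<dots> = (\<Sum>i<n. \<Sum>j<n. t i j)"
    by (rule sum.cartesian_product [symmetric])
  finally show ?thesis
    unfolding double_sum by simp
qed

lemma strict_mono_on_power_series_quotient:
  fixes a b :: "nat \<Rightarrow> real"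
  assumes b_pos: "\<And>k. b k > 0" and ratio_mono: "strict_mono (\<lambda>k. a k / b k)"
    and summable_a: "\<And>y. 0 < y \<Longrightarrow> summable (\<lambda>k. a k * y ^ k)"
    and summable_b: "\<And>y. 0 < y \<Longrightarrow> summable (\<lambda>k. b k * y ^ k)"
  shows "strict_mono_on {0<..} (\<lambda>y. (\<Sum>k. a k * y ^ k) / (\<Sum>k. b k * y ^ k))"
proof (rule strict_mono_onI)
  fix y z :: real
  assume "y \<in> {0<..}" "z \<in> {0<..}" and yz: "y < z"
  then have y: "0 < y" and z: "0 < z" by auto
  define A where "A t = (\<Sum>k. a k * t ^ k)" for t
  define B where "B t = (\<Sum>k. b k * t ^ k)" for t
  have "(\<lambda>n. (\<Sum>k<n. a k * z ^ k) * (\<Sum>k<n. b k * y ^ k) - (\<Sum>k<n. a k * y ^ k) * (\<Sum>k<n. b k * z ^ k))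
      \<longlonglongrightarrow> A z * B y - A y * B z"
    unfolding A_def B_def by (intro tendsto_intros summable_LIMSEQ summable_a summable_b y z)
  then have "(a 1 * b 0 - a 0 * b 1) * (z - y) \<le> A z * B y - A y * B z"
    using power_series_cross_difference_lower_bound[OF b_pos ratio_mono y yz]
    by (intro LIMSEQ_le_const) auto
  moreover have "a 0 * b 1 < a 1 * b 0"
    using strict_monoD[OF ratio_mono, of 0 1] b_pos[of 0] b_pos[of 1] by (simp add: field_simps)
  then have "0 < (a 1 * b 0 - a 0 * b 1) * (z - y)"
    using yz by simp
  ultimately have "A y * B z < A z * B y"
    by linarith
  moreover have "B y > 0" "B z > 0"
    unfolding B_def using y z b_pos summable_b by (auto intro!: suminf_pos)
  ultimately show "A y / B y < A z / B z"
    by (simp add: divide_less_eq less_divide_eq mult_ac)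
qed

definition gamma_coeff :: "real \<Rightarrow> real \<Rightarrow> nat \<Rightarrow> real" where
  "gamma_coeff p q k = rGamma (real k + p) * rGamma (real k + q)"

definition gamma_series :: "real \<Rightarrow> real \<Rightarrow> real \<Rightarrow> real" where
  "gamma_series p q y = (\<Sum>k. gamma_coeff p q k * y ^ k)"

lemma gamma_coeff_pos: "p > 0 \<Longrightarrow> q > 0 \<Longrightarrow> gamma_coeff p q k > 0"
  by (simp add: gamma_coeff_def rGamma_inverse_Gamma add_nonneg_pos)

lemma gamma_coeff_Suc:
  "gamma_coeff p q (Suc k) * ((real k + p) * (real k + q)) = gamma_coeff p q k"
proof -
  have shift: "rGamma (real (Suc k) + c) * (real k + c) = rGamma (real k + c)" for c
    using rGamma_plus1[of "real k + c"] by (simp add: algebra_simps)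
  have "gamma_coeff p q (Suc k) * ((real k + p) * (real k + q))
      = (rGamma (real (Suc k) + p) * (real k + p)) * (rGamma (real (Suc k) + q) * (real k + q))"
    by (simp add: gamma_coeff_def mult_ac)
  then show ?thesis by (simp only: shift gamma_coeff_def)
qed

lemma gamma_coeff_Suc_divide:
  assumes "p > 0" "q > 0"
  shows "gamma_coeff p q (Suc k) = gamma_coeff p q k / ((real k + p) * (real k + q))"
proof -
  have "real k + p > 0" "real k + q > 0" using assms by simp_all
  then show ?thesis using gamma_coeff_Suc[of p q k] by (simp add: eq_divide_eq)
qed

lemma summable_gamma_coeff_power:
  assumes p: "p > 0" and q: "q > 0"
  shows "summable (\<lambda>k. gamma_coeff p q k * y ^ k)"
proof (rule summable_ratio_test[where c = "1/2" and N = "nat \<lceil>2 * \<bar>y\<bar>\<rceil> + 1"])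
  fix n assume n: "nat \<lceil>2 * \<bar>y\<bar>\<rceil> + 1 \<le> n"
  have "2 * \<bar>y\<bar> \<le> real n" "1 \<le> real n" using n by linarith+
  then have "2 * \<bar>y\<bar> \<le> real n * real n"
    by (smt (verit) mult_le_cancel_left1)
  also have "real n * real n \<le> (real n + p) * (real n + q)"
    using p q by (intro mult_mono) auto
  finally have "\<bar>y\<bar> / ((real n + p) * (real n + q)) \<le> 1/2"
    using p q by (simp add: divide_le_eq)
  moreover have "norm (gamma_coeff p q (Suc n) * y ^ Suc n)
      = norm (gamma_coeff p q n * y ^ n) * (\<bar>y\<bar> / ((real n + p) * (real n + q)))"
    using p q by (simp add: gamma_coeff_Suc_divide abs_mult power_abs)
  ultimately have "norm (gamma_coeff p q (Suc n) * y ^ Suc n) \<le> norm (gamma_coeff p q n * y ^ n) * (1/2)"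
    by (metis mult_left_mono norm_ge_zero)
  then show "norm (gamma_coeff p q (Suc n) * y ^ Suc n) \<le> 1/2 * norm (gamma_coeff p q n * y ^ n)"
    by simp
qed simp

lemma gamma_series_pos: "p > 0 \<Longrightarrow> q > 0 \<Longrightarrow> y > 0 \<Longrightarrow> gamma_series p q y > 0"
  unfolding gamma_series_def
  by (intro suminf_pos summable_gamma_coeff_power) (auto intro: mult_pos_pos gamma_coeff_pos)

lemma strict_mono_gamma_coeff_quotient:
  assumes p: "p > 0" and q: "q > 0" and r: "r > 0" and s: "s > 0"
    and sum_eq: "p + q = r + s" and prod_less: "p * q < r * s"
  shows "strict_mono (\<lambda>k. gamma_coeff p q k / gamma_coeff r s k)"
proof (rule strict_monoI_Suc)
  fix k
  define P where "P = (real k + p) * (real k + q)"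
  define R where "R = (real k + r) * (real k + s)"
  have "R - P = r * s - p * q + real k * ((r + s) - (p + q))"
    unfolding P_def R_def by algebra
  then have "P < R" using sum_eq prod_less by simp
  moreover have "P > 0" using p q by (simp add: P_def)
  ultimately have factor: "1 < R / P" by simp
  have "gamma_coeff p q k / gamma_coeff r s k * (R / P)
      = gamma_coeff p q (Suc k) / gamma_coeff r s (Suc k)"
    using \<open>P > 0\<close> \<open>P < R\<close> p q r s by (simp add: gamma_coeff_Suc_divide P_def R_def mult_ac)
  moreover have "gamma_coeff p q k / gamma_coeff r s k > 0"
    using gamma_coeff_pos p q r s by simp
  ultimately show "gamma_coeff p q k / gamma_coeff r s k < gamma_coeff p q (Suc k) / gamma_coeff r s (Suc k)"
    using factor by (metis mult.right_neutral mult_strict_left_mono)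
qed

lemma strict_mono_on_gamma_series_quotient:
  assumes "p > 0" "q > 0" "r > 0" "s > 0" "p + q = r + s" "p * q < r * s"
  shows "strict_mono_on {0<..} (\<lambda>y. gamma_series p q y / gamma_series r s y)"
  unfolding gamma_series_def using assms
  by (intro strict_mono_on_power_series_quotient strict_mono_gamma_coeff_quotient
      summable_gamma_coeff_power gamma_coeff_pos)

lemma strict_antimono_on_gamma_series_quotient:
  assumes "p > 0" "q > 0" "r > 0" "s > 0" "p + q = r + s" "r * s < p * q"
  shows "strict_antimono_on {0<..} (\<lambda>y. gamma_series p q y / gamma_series r s y)"
proof (rule monotone_onI)
  fix y z :: real
  assume yz: "y \<in> {0<..}" "z \<in> {0<..}" "y < z"
  have "strict_mono_on {0<..} (\<lambda>y. gamma_series r s y / gamma_series p q y)"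
    by (rule strict_mono_on_gamma_series_quotient[OF assms(3,4,1,2) assms(5) [symmetric] assms(6)])
  then have "gamma_series r s y / gamma_series p q y < gamma_series r s z / gamma_series p q z"
    using yz by (rule monotone_onD)
  moreover have "gamma_series r s y / gamma_series p q y > 0"
    using assms yz by (simp add: gamma_series_pos)
  ultimately have "inverse (gamma_series r s z / gamma_series p q z)
      < inverse (gamma_series r s y / gamma_series p q y)"
    by (rule less_imp_inverse_less)
  then show "gamma_series p q z / gamma_series r s z < gamma_series p q y / gamma_series r s y"
    by simp
qed

lemma powr_series_eq_gamma_series:
  assumes x: "x > 0" and p: "p > 0" and q: "q > 0"
  shows "(\<Sum>k. (x / 2) powr (2 * real k + e) * rGamma (real k + p) * rGamma (real k + q))
    = (x / 2) powr e * gamma_series p q ((x / 2)^2)"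
proof -
  have "(x / 2) powr (2 * real k + e) = (x / 2) powr e * ((x / 2)^2)^k" for k
  proof -
    have "(x / 2) powr (2 * real k + e) = (x / 2) powr e * (x / 2) powr (real (2 * k))"
      by (simp add: powr_add)
    also have "(x / 2) powr (real (2 * k)) = ((x / 2)^2)^k"
      using x by (subst powr_realpow) (simp_all add: power_mult)
    finally show ?thesis .
  qed
  then show ?thesis
    unfolding gamma_series_def
    using suminf_mult[OF summable_gamma_coeff_power[OF p q], of "(x / 2) powr e" "(x / 2)^2"]
    by (simp add: gamma_coeff_def mult_ac)
qed

lemma lommel_t_eq_gamma_series:
  assumes "x > 0" "\<bar>\<nu>\<bar> < \<mu> + 3"
  shows "lommel_t \<mu> \<nu> x
    = (x / 2) powr (\<mu> + 1) * gamma_series ((\<mu> - \<nu> + 3) / 2) ((\<mu> + \<nu> + 3) / 2) ((x / 2)^2)"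
  using powr_series_eq_gamma_series[of x "(\<mu> - \<nu> + 3) / 2" "(\<mu> + \<nu> + 3) / 2" "\<mu> + 1"] assms
  by (simp add: lommel_t_def add_ac abs_less_iff)

lemma lommel_t_parameters_pos:
  fixes \<mu> \<nu> :: real
  assumes "\<bar>\<nu>\<bar> < \<mu> + 3"
  shows "(\<mu> - \<nu> + 3) / 2 > 0" "(\<mu> + \<nu> + 3) / 2 > 0"
  using assms by (simp_all add: abs_less_iff)

lemma struve_L_eq_lommel_t: "struve_L \<mu> = lommel_t \<mu> \<mu>"
proof
  fix x
  have "\<mu> + 2 * real k + 1 = 2 * real k + \<mu> + 1"
    and "real k + (\<mu> - \<mu> + 3) / 2 = real k + 3/2"
    and "real k + (\<mu> + \<mu> + 3) / 2 = real k + \<mu> + 3/2" for k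
    by simp_all
  then show "struve_L \<mu> x = lommel_t \<mu> \<mu> x"
    by (simp only: struve_L_def lommel_t_def)
qed

lemma monotone_on_lommel_t_quotient:
  assumes \<nu>\<^sub>1: "\<bar>\<nu>\<^sub>1\<bar> < \<mu> + 3" and \<nu>\<^sub>2: "\<bar>\<nu>\<^sub>2\<bar> < \<mu> + 3"
    and mono: "monotone_on {0<..} (<) ord (\<lambda>y. gamma_series ((\<mu> - \<nu>\<^sub>1 + 3) / 2) ((\<mu> + \<nu>\<^sub>1 + 3) / 2) y
      / gamma_series ((\<mu> - \<nu>\<^sub>2 + 3) / 2) ((\<mu> + \<nu>\<^sub>2 + 3) / 2) y)"
  shows "monotone_on {0<..} (<) ord (\<lambda>x. lommel_t \<mu> \<nu>\<^sub>1 x / lommel_t \<mu> \<nu>\<^sub>2 x)"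
proof (rule monotone_onI)
  let ?G = "\<lambda>y. gamma_series ((\<mu> - \<nu>\<^sub>1 + 3) / 2) ((\<mu> + \<nu>\<^sub>1 + 3) / 2) y
      / gamma_series ((\<mu> - \<nu>\<^sub>2 + 3) / 2) ((\<mu> + \<nu>\<^sub>2 + 3) / 2) y"
  have quotient: "lommel_t \<mu> \<nu>\<^sub>1 x / lommel_t \<mu> \<nu>\<^sub>2 x = ?G ((x / 2)^2)" if "x > 0" for x
    using that lommel_t_eq_gamma_series[OF that \<nu>\<^sub>1] lommel_t_eq_gamma_series[OF that \<nu>\<^sub>2] by simp
  fix x x' :: real
  assume "x \<in> {0<..}" "x' \<in> {0<..}" "x < x'"
  then have "(x / 2)^2 \<in> {0<..}" "(x' / 2)^2 \<in> {0<..}" "(x / 2)^2 < (x' / 2)^2"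
    by (auto intro: power_strict_mono)
  then have "ord (?G ((x / 2)^2)) (?G ((x' / 2)^2))"
    by (rule monotone_onD[OF mono])
  then show "ord (lommel_t \<mu> \<nu>\<^sub>1 x / lommel_t \<mu> \<nu>\<^sub>2 x) (lommel_t \<mu> \<nu>\<^sub>1 x' / lommel_t \<mu> \<nu>\<^sub>2 x')"
    using quotient \<open>x \<in> {0<..}\<close> \<open>x' \<in> {0<..}\<close> by simp
qed

lemma strict_mono_on_lommel_t_quotient:
  assumes \<nu>\<^sub>1: "\<bar>\<nu>\<^sub>1\<bar> < \<mu> + 3" and less: "\<bar>\<nu>\<^sub>2\<bar> < \<bar>\<nu>\<^sub>1\<bar>"
  shows "strict_mono_on {0<..} (\<lambda>x. lommel_t \<mu> \<nu>\<^sub>1 x / lommel_t \<mu> \<nu>\<^sub>2 x)"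
proof -
  have \<nu>\<^sub>2: "\<bar>\<nu>\<^sub>2\<bar> < \<mu> + 3" using \<nu>\<^sub>1 less by linarith
  have "\<nu>\<^sub>2^2 < \<nu>\<^sub>1^2" using less by (metis abs_le_square_iff not_le)
  then have prod: "(\<mu> - \<nu>\<^sub>1 + 3) / 2 * ((\<mu> + \<nu>\<^sub>1 + 3) / 2) < (\<mu> - \<nu>\<^sub>2 + 3) / 2 * ((\<mu> + \<nu>\<^sub>2 + 3) / 2)"
    by (simp add: field_simps power2_eq_square)
  have sum: "(\<mu> - \<nu>\<^sub>1 + 3) / 2 + (\<mu> + \<nu>\<^sub>1 + 3) / 2 = (\<mu> - \<nu>\<^sub>2 + 3) / 2 + (\<mu> + \<nu>\<^sub>2 + 3) / 2"
    by (simp add: field_simps)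
  show ?thesis
    by (rule monotone_on_lommel_t_quotient[OF \<nu>\<^sub>1 \<nu>\<^sub>2 strict_mono_on_gamma_series_quotient[OF
          lommel_t_parameters_pos[OF \<nu>\<^sub>1] lommel_t_parameters_pos[OF \<nu>\<^sub>2] sum prod]])
qed

lemma strict_antimono_on_lommel_t_quotient:
  assumes \<nu>\<^sub>2: "\<bar>\<nu>\<^sub>2\<bar> < \<mu> + 3" and less: "\<bar>\<nu>\<^sub>1\<bar> < \<bar>\<nu>\<^sub>2\<bar>"
  shows "strict_antimono_on {0<..} (\<lambda>x. lommel_t \<mu> \<nu>\<^sub>1 x / lommel_t \<mu> \<nu>\<^sub>2 x)"
proof -
  have \<nu>\<^sub>1: "\<bar>\<nu>\<^sub>1\<bar> < \<mu> + 3" using \<nu>\<^sub>2 less by linarith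
  have "\<nu>\<^sub>1^2 < \<nu>\<^sub>2^2" using less by (metis abs_le_square_iff not_le)
  then have prod: "(\<mu> - \<nu>\<^sub>2 + 3) / 2 * ((\<mu> + \<nu>\<^sub>2 + 3) / 2) < (\<mu> - \<nu>\<^sub>1 + 3) / 2 * ((\<mu> + \<nu>\<^sub>1 + 3) / 2)"
    by (simp add: field_simps power2_eq_square)
  have sum: "(\<mu> - \<nu>\<^sub>1 + 3) / 2 + (\<mu> + \<nu>\<^sub>1 + 3) / 2 = (\<mu> - \<nu>\<^sub>2 + 3) / 2 + (\<mu> + \<nu>\<^sub>2 + 3) / 2"
    by (simp add: field_simps)
  show ?thesis
    by (rule monotone_on_lommel_t_quotient[OF \<nu>\<^sub>1 \<nu>\<^sub>2 strict_antimono_on_gamma_series_quotient[OF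
          lommel_t_parameters_pos[OF \<nu>\<^sub>1] lommel_t_parameters_pos[OF \<nu>\<^sub>2] sum prod]])
qed

theorem theorem3p2:
  fixes \<mu> \<nu> :: real
  shows "(\<mu> > -3/2 \<and> \<bar>\<mu>\<bar> > \<bar>\<nu>\<bar> \<longrightarrow>
           strict_mono_on {0<..} (\<lambda>x. struve_L \<mu> x / lommel_t \<mu> \<nu> x))
       \<and> (\<mu> > -3/2 \<and> \<bar>\<mu>\<bar> < \<bar>\<nu>\<bar> \<and> \<bar>\<nu>\<bar> < \<mu> + 3 \<longrightarrow>
           strict_antimono_on {0<..} (\<lambda>x. struve_L \<mu> x / lommel_t \<mu> \<nu> x))"
  unfolding struve_L_eq_lommel_t
proof (intro conjI impI)
  assume "\<mu> > -3/2 \<and> \<bar>\<mu>\<bar> > \<bar>\<nu>\<bar>"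
  then have "\<bar>\<mu>\<bar> < \<mu> + 3" "\<bar>\<nu>\<bar> < \<bar>\<mu>\<bar>"
    by (simp_all add: abs_less_iff)
  then show "strict_mono_on {0<..} (\<lambda>x. lommel_t \<mu> \<mu> x / lommel_t \<mu> \<nu> x)"
    by (rule strict_mono_on_lommel_t_quotient)
next
  assume "\<mu> > -3/2 \<and> \<bar>\<mu>\<bar> < \<bar>\<nu>\<bar> \<and> \<bar>\<nu>\<bar> < \<mu> + 3"
  then show "strict_antimono_on {0<..} (\<lambda>x. lommel_t \<mu> \<mu> x / lommel_t \<mu> \<nu> x)"
    by (intro strict_antimono_on_lommel_t_quotient) simp_all
qed

end
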